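(* For every directed co-graph $G$, $\mathrm{dpw}(G)=\mathrm{dtw}(G)$.
   Context: Digraphs are finite, without loops or multiple arcs. Operations on vertex-disjoint digraphs $G_1,\ldots,G_k$: the disjoint union $G_1\oplus\cdots\oplus G_k$ (union of vertex and arc sets); the series composition $G_1\otimes\cdots\otimes G_k$ (disjoint union plus all arcs between vertices of $G_i$ and $G_j$ for all $i\neq j$, in both directions); the order composition $G_1\oslash\cdots\oslash G_k$ (disjoint union plus all arcs from vertices of $G_i$ to vertices of $G_j$ for all $i<j$). Directed co-graphs: every single-vertex digraph is a directed co-graph, and if $G_1,\ldots,G_k$ are vertex-disjoint directed co-graphs then their disjoint union, series composition and order composition are directed co-graphs. Directed path-width: a directed path-decomposition of $G=(V,E)$ is a sequence $(X_1,\ldots,X_r)$ of subsets of $V$ with $\bigcup X_i=V$, for each arc $(u,v)$ some $i\le j$ with $u\in X_i,v\in X_j$, and for each vertex the indices of bags containing it forming an interval; width $\max|X_i|-1$; $\mathrm{dpw}(G)$ is the minimum width. Directed tree-width: for $Z\subseteq V$, $S\subseteq V$ is $Z$-normal if no directed walk in $G-Z$ with first and last vertex in $S$ uses a vertex of $G-(Z\cup S)$. A directed tree-decomposition is $(T,\mathcal{X},\mathcal{W})$ with $T=(V_T,E_T)$ an out-tree (rooted tree with arcs directed away from the root; $u\le v$ means a directed path of $\ge0$ arcs from $u$ to $v$), $\mathcal{X}=\{X_e:e\in E_T\}$, $\mathcal{W}=\{W_r:r\in V_T\}$ subsets of $V$, such that $\mathcal{W}$ partitions $V$ into nonempty sets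 and for each $(u,v)\in E_T$ the set $\bigcup\{W_r: v\le r\}$ is $X_{(u,v)}$-normal; width $\max_r|W_r\cup\bigcup_{e\sim r}X_e|-1$ ($e\sim r$: $r$ is an end of $e$); $\mathrm{dtw}(G)$ is the minimum width. *)

theory Defs
  imports Main
begin

type_synonym 'a digraph = "'a set \<times> ('a \<times> 'a) set"

definition verts :: "'a digraph \<Rightarrow> 'a set" where "verts G = fst G"
definition arcs :: "'a digraph \<Rightarrow> ('a \<times> 'a) set" where "arcs G = snd G"

definition is_digraph :: "'a digraph \<Rightarrow> bool" where
  "is_digraph G \<longleftrightarrow> finite (verts G) \<and> arcs G \<subseteq> verts G \<times> verts G
     \<and> (\<forall>v. (v, v) \<notin> arcs G)"

definition pw_disjoint :: "'a digraph list \<Rightarrow> bool" where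
  "pw_disjoint Gs \<longleftrightarrow> (\<forall>i < length Gs. \<forall>j < length Gs. i \<noteq> j \<longrightarrow>
       verts (Gs ! i) \<inter> verts (Gs ! j) = {})"

definition disj_union :: "'a digraph list \<Rightarrow> 'a digraph" where
  "disj_union Gs = ((\<Union>G\<in>set Gs. verts G), (\<Union>G\<in>set Gs. arcs G))"

definition series_comp :: "'a digraph list \<Rightarrow> 'a digraph" where
  "series_comp Gs = ((\<Union>G\<in>set Gs. verts G),
     (\<Union>G\<in>set Gs. arcs G) \<union>
     {(u, v). \<exists>i < length Gs. \<exists>j < length Gs. i \<noteq> j \<and> u \<in> verts (Gs ! i) \<and> v \<in> verts (Gs ! j)})"

definition order_comp :: "'a digraph list \<Rightarrow> 'a digraph" where
  "order_comp Gs = ((\<Union>G\<in>set Gs. verts G),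
     (\<Union>G\<in>set Gs. arcs G) \<union>
     {(u, v). \<exists>i < length Gs. \<exists>j < length Gs. i < j \<and> u \<in> verts (Gs ! i) \<and> v \<in> verts (Gs ! j)})"

inductive dcograph :: "'a digraph \<Rightarrow> bool" where
  single: "dcograph ({v}, {})"
| union: "\<lbrakk>Gs \<noteq> []; \<forall>G\<in>set Gs. dcograph G; pw_disjoint Gs\<rbrakk> \<Longrightarrow> dcograph (disj_union Gs)"
| series: "\<lbrakk>Gs \<noteq> []; \<forall>G\<in>set Gs. dcograph G; pw_disjoint Gs\<rbrakk> \<Longrightarrow> dcograph (series_comp Gs)"
| order: "\<lbrakk>Gs \<noteq> []; \<forall>G\<in>set Gs. dcograph G; pw_disjoint Gs\<rbrakk> \<Longrightarrow> dcograph (order_comp Gs)"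

definition is_dir_path_decomp :: "'a digraph \<Rightarrow> 'a set list \<Rightarrow> bool" where
  "is_dir_path_decomp G Xs \<longleftrightarrow>
     (\<forall>X\<in>set Xs. X \<subseteq> verts G) \<and>
     (\<Union>X\<in>set Xs. X) = verts G \<and>
     (\<forall>(u, v)\<in>arcs G. \<exists>i < length Xs. \<exists>j < length Xs. i \<le> j \<and> u \<in> Xs ! i \<and> v \<in> Xs ! j) \<and>
     (\<forall>v i j k. i \<le> j \<and> j \<le> k \<and> k < length Xs \<and> v \<in> Xs ! i \<and> v \<in> Xs ! k \<longrightarrow> v \<in> Xs ! j)"

definition path_decomp_width :: "'a set list \<Rightarrow> nat" where
  "path_decomp_width Xs = Max (card ` set Xs) - 1"

definition dpw :: "'a digraph \<Rightarrow> nat" where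
  "dpw G = (LEAST w. \<exists>Xs. is_dir_path_decomp G Xs \<and> path_decomp_width Xs = w)"

definition walk_avoiding :: "'a digraph \<Rightarrow> 'a set \<Rightarrow> 'a list \<Rightarrow> bool" where
  "walk_avoiding G Z ws \<longleftrightarrow> ws \<noteq> [] \<and> (\<forall>w\<in>set ws. w \<in> verts G - Z) \<and>
     (\<forall>i. Suc i < length ws \<longrightarrow> (ws ! i, ws ! Suc i) \<in> arcs G)"

definition Z_normal :: "'a digraph \<Rightarrow> 'a set \<Rightarrow> 'a set \<Rightarrow> bool" where
  "Z_normal G Z S \<longleftrightarrow> \<not> (\<exists>ws. walk_avoiding G Z ws \<and> hd ws \<in> S \<and> last ws \<in> S \<and>
       (\<exists>w\<in>set ws. w \<in> verts G - (Z \<union> S)))"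

definition is_out_tree :: "nat set \<Rightarrow> (nat \<times> nat) set \<Rightarrow> bool" where
  "is_out_tree VT ET \<longleftrightarrow> finite VT \<and> VT \<noteq> {} \<and> ET \<subseteq> VT \<times> VT \<and>
     (\<exists>r\<in>VT. (\<forall>u. (u, r) \<notin> ET) \<and>
        (\<forall>v\<in>VT - {r}. \<exists>!u. (u, v) \<in> ET) \<and>
        (\<forall>v\<in>VT. (r, v) \<in> ET\<^sup>*))"

definition is_dir_tree_decomp ::
  "'a digraph \<Rightarrow> nat set \<Rightarrow> (nat \<times> nat) set \<Rightarrow> (nat \<times> nat \<Rightarrow> 'a set) \<Rightarrow> (nat \<Rightarrow> 'a set) \<Rightarrow> bool" where
  "is_dir_tree_decomp G VT ET X W \<longleftrightarrow>
     is_out_tree VT ET \<and>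
     (\<forall>e\<in>ET. X e \<subseteq> verts G) \<and>
     (\<forall>r\<in>VT. W r \<subseteq> verts G \<and> W r \<noteq> {}) \<and>
     (\<forall>r\<in>VT. \<forall>s\<in>VT. r \<noteq> s \<longrightarrow> W r \<inter> W s = {}) \<and>
     (\<Union>r\<in>VT. W r) = verts G \<and>
     (\<forall>(u, v)\<in>ET. Z_normal G (X (u, v)) (\<Union>{W r | r. r \<in> VT \<and> (v, r) \<in> ET\<^sup>*}))"

definition tree_decomp_width ::
  "nat set \<Rightarrow> (nat \<times> nat) set \<Rightarrow> (nat \<times> nat \<Rightarrow> 'a set) \<Rightarrow> (nat \<Rightarrow> 'a set) \<Rightarrow> nat" where
  "tree_decomp_width VT ET X W =
     Max ((\<lambda>r. card (W r \<union> \<Union>{X e | e. e \<in> ET \<and> (fst e = r \<or> snd e = r)})) ` VT) - 1"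

definition dtw :: "'a digraph \<Rightarrow> nat" where
  "dtw G = (LEAST w. \<exists>VT ET X W. is_dir_tree_decomp G VT ET X W \<and> tree_decomp_width VT ET X W = w)"

end

theory Submission
  imports Defs
begin

text \<open>
  Every path-decomposition yields a tree-decomposition of no larger width: keep as tree nodes the
  bags that introduce a new vertex, join consecutive ones, and let each node own the vertices it
  introduces. Hence \<open>dtw G \<le> dpw G\<close> for every digraph.
  Conversely, a haven of order \<open>k\<close> forces some node of any tree-decomposition to carry more than
  \<open>k\<close> vertices: starting at the root, the haven's choice for the current bag always lies below it,
  and normality of the edge separators pushes it further down into a child, which cannot go on forever.
  So \<open>dpw G = dtw G\<close> as soon as \<open>G\<close> has a path-decomposition with bags of at most \<open>k + 1\<close>
  vertices together with a haven of order \<open>k\<close>. Co-graphs have such a pair, by induction on their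
  construction. For disjoint union and order composition, concatenate the path-decompositions and keep
  the haven of larger order. For the series composition of \<open>G\<^sub>1\<close> and \<open>G\<^sub>2\<close>, add all of \<open>V(G\<^sub>2)\<close>
  to every bag of \<open>G\<^sub>1\<close> (for the side minimising \<open>k\<^sub>1 + |V(G\<^sub>2)|\<close>); the haven maps \<open>Z\<close> to
  \<open>V - Z\<close> while \<open>Z\<close> misses vertices of both sides, which is strongly connected through the arcs
  between the sides, and otherwise to the haven of the side that \<open>Z\<close> does not cover.
\<close>

section \<open>Walks avoiding a set and havens\<close>

lemma walk_avoiding_singleton: "walk_avoiding G Z [x] \<longleftrightarrow> x \<in> verts G - Z"
  by (auto simp: walk_avoiding_def)

lemma walk_avoiding_Cons_Cons:
  "walk_avoiding G Z (x # y # ws) \<longleftrightarrow>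
     x \<in> verts G - Z \<and> (x, y) \<in> arcs G \<and> walk_avoiding G Z (y # ws)"
  by (auto simp: walk_avoiding_def nth_Cons split: nat.splits)

lemma walk_avoiding_append:
  assumes "walk_avoiding G Z xs" "walk_avoiding G Z (last xs # ys)"
  shows "walk_avoiding G Z (xs @ ys)"
  using assms
proof (induction xs rule: induct_list012)
  case (3 x y zs)
  then show ?case by (simp add: walk_avoiding_Cons_Cons)
qed (auto simp: walk_avoiding_def)

lemma walk_avoiding_subgraph:
  assumes "walk_avoiding H (Z \<inter> verts H) ws" "verts H \<subseteq> verts G" "arcs H \<subseteq> arcs G"
  shows "walk_avoiding G Z ws"
  using assms by (auto simp: walk_avoiding_def)

lemma walk_avoiding_closed:
  assumes "walk_avoiding G Z ws" "hd ws \<in> S"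
    and "\<And>p q. (p, q) \<in> arcs G \<Longrightarrow> p \<in> S \<Longrightarrow> q \<in> verts G - Z \<Longrightarrow> q \<in> S"
  shows "set ws \<subseteq> S"
  using assms(1,2)
proof (induction ws rule: induct_list012)
  case (3 x y zs)
  then have "y \<in> S" using assms(3) by (auto simp: walk_avoiding_Cons_Cons walk_avoiding_def)
  with 3 show ?case by (auto simp: walk_avoiding_Cons_Cons)
qed auto

lemma Z_normal_if_out_closed:
  assumes "\<And>p q. (p, q) \<in> arcs G \<Longrightarrow> p \<in> S \<Longrightarrow> q \<in> verts G - Z \<Longrightarrow> q \<in> S"
  shows "Z_normal G Z S"
  unfolding Z_normal_def
proof
  assume "\<exists>ws. walk_avoiding G Z ws \<and> hd ws \<in> S \<and> last ws \<in> S \<and> (\<exists>w\<in>set ws. w \<in> verts G - (Z \<union> S))"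
  then obtain ws w where "walk_avoiding G Z ws" "hd ws \<in> S" "w \<in> set ws" "w \<notin> S"
    by blast
  then show False using walk_avoiding_closed[of G Z ws S] assms by blast
qed

definition strongly_connected_avoiding :: "'a digraph \<Rightarrow> 'a set \<Rightarrow> 'a set \<Rightarrow> bool" where
  "strongly_connected_avoiding G Z C \<longleftrightarrow>
     (\<forall>x\<in>C. \<forall>y\<in>C. \<exists>ws. walk_avoiding G Z ws \<and> hd ws = x \<and> last ws = y)"

lemma Z_normal_strongly_connected_subset_or_disjoint:
  assumes normal: "Z_normal G Z S" and strong: "strongly_connected_avoiding G Z C"
    and C: "C \<subseteq> verts G - Z"
  shows "C \<subseteq> S \<or> C \<inter> S = {}"
proof (rule ccontr)
  assume "\<not> ?thesis"
  then obtain x y where x: "x \<in> C" "x \<in> S" and y: "y \<in> C" "y \<notin> S" by blast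
  obtain ws1 where ws1: "walk_avoiding G Z ws1" "hd ws1 = x" "last ws1 = y"
    using strong x y unfolding strongly_connected_avoiding_def by blast
  obtain ws2 where ws2: "walk_avoiding G Z ws2" "hd ws2 = y" "last ws2 = x"
    using strong x y unfolding strongly_connected_avoiding_def by blast
  have ws2_eq: "ws2 = y # tl ws2" and "tl ws2 \<noteq> []"
    using ws2 x y by (cases ws2; auto simp: walk_avoiding_def)+
  define ws where "ws = ws1 @ tl ws2"
  have "walk_avoiding G Z ws"
    unfolding ws_def using ws1 ws2 ws2_eq by (metis walk_avoiding_append)
  moreover have "hd ws = x" "last ws = x" "y \<in> set ws"
    using ws1 ws2 ws2_eq \<open>tl ws2 \<noteq> []\<close> unfolding ws_def
    by (auto simp: walk_avoiding_def) (metis last_ConsR)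
  moreover have "y \<in> verts G - (Z \<union> S)" using y C by blast
  ultimately show False
    using normal x unfolding Z_normal_def by metis
qed

text \<open>Unlike the usual notion, \<open>\<beta> Z\<close> need not be a whole strong component of \<open>G - Z\<close>,
  only a nonempty subset of one; this suffices for the lower bound on \<open>dtw\<close>.\<close>
definition haven :: "'a digraph \<Rightarrow> nat \<Rightarrow> ('a set \<Rightarrow> 'a set) \<Rightarrow> bool" where
  "haven G k \<beta> \<longleftrightarrow>
     (\<forall>Z. Z \<subseteq> verts G \<longrightarrow> card Z \<le> k \<longrightarrow>
        \<beta> Z \<noteq> {} \<and> \<beta> Z \<subseteq> verts G - Z \<and> strongly_connected_avoiding G Z (\<beta> Z)) \<and>
     (\<forall>Z Z'. Z \<subseteq> verts G \<longrightarrow> card Z \<le> k \<longrightarrow> Z' \<subseteq> Z \<longrightarrow> \<beta> Z \<subseteq> \<beta> Z')"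

lemma havenD:
  assumes "haven G k \<beta>" "Z \<subseteq> verts G" "card Z \<le> k"
  shows "\<beta> Z \<noteq> {}" "\<beta> Z \<subseteq> verts G - Z" "strongly_connected_avoiding G Z (\<beta> Z)"
  using assms unfolding haven_def by blast+

lemma haven_antimono:
  assumes "haven G k \<beta>" "Z \<subseteq> verts G" "card Z \<le> k" "Z' \<subseteq> Z"
  shows "\<beta> Z \<subseteq> \<beta> Z'"
  using assms unfolding haven_def by blast

lemma haven_order_less_card:
  assumes "haven G k \<beta>"
  shows "k < card (verts G)"
proof (rule ccontr)
  assume "\<not> k < card (verts G)"
  then show False using havenD(1,2)[OF assms order_refl] by auto
qed

section \<open>Havens bound directed tree-width from below\<close>

definition tree_bag :: "(nat \<times> nat) set \<Rightarrow> (nat \<times> nat \<Rightarrow> 'a set) \<Rightarrow> (nat \<Rightarrow> 'a set) \<Rightarrow> nat \<Rightarrow> 'a set" where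
  "tree_bag ET X W r = W r \<union> \<Union>{X e | e. e \<in> ET \<and> (fst e = r \<or> snd e = r)}"

definition subtree_union :: "nat set \<Rightarrow> (nat \<times> nat) set \<Rightarrow> (nat \<Rightarrow> 'a set) \<Rightarrow> nat \<Rightarrow> 'a set" where
  "subtree_union VT ET W v = \<Union>{W r | r. r \<in> VT \<and> (v, r) \<in> ET\<^sup>*}"

lemma tree_decomp_width_eq:
  "tree_decomp_width VT ET X W = Max ((\<lambda>r. card (tree_bag ET X W r)) ` VT) - 1"
  by (simp add: tree_decomp_width_def tree_bag_def)

lemma is_dir_tree_decompD:
  assumes "is_dir_tree_decomp G VT ET X W"
  shows "is_out_tree VT ET" "e \<in> ET \<Longrightarrow> X e \<subseteq> verts G" "r \<in> VT \<Longrightarrow> W r \<subseteq> verts G"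
    "(\<Union>r\<in>VT. W r) = verts G"
    "(u, v) \<in> ET \<Longrightarrow> Z_normal G (X (u, v)) (subtree_union VT ET W v)"
  using assms unfolding is_dir_tree_decomp_def subtree_union_def by auto

lemma tree_bag_subset_verts:
  assumes "is_dir_tree_decomp G VT ET X W" "r \<in> VT"
  shows "tree_bag ET X W r \<subseteq> verts G"
  using is_dir_tree_decompD(2,3)[OF assms(1)] assms(2) unfolding tree_bag_def by blast

lemma out_tree_acyclic:
  assumes "is_out_tree VT ET"
  shows "acyclic ET"
  unfolding acyclic_def
proof
  fix v
  obtain root where ET: "ET \<subseteq> VT \<times> VT" and root: "\<forall>u. (u, root) \<notin> ET"
    and parent: "\<forall>v\<in>VT - {root}. \<exists>!u. (u, v) \<in> ET" and reach: "\<forall>v\<in>VT. (root, v) \<in> ET\<^sup>*"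
    using assms unfolding is_out_tree_def by blast
  show "(v, v) \<notin> ET\<^sup>+"
  proof
    assume cycle: "(v, v) \<in> ET\<^sup>+"
    then have "v \<in> VT" using ET by (auto dest: tranclD)
    then have "(root, v) \<in> ET\<^sup>*" using reach by blast
    then show False using cycle
    proof (induction rule: rtrancl_induct)
      case base
      then show False using root by (auto dest: tranclD2)
    next
      case (step a b)
      from \<open>(b, b) \<in> ET\<^sup>+\<close> obtain p where "(b, p) \<in> ET\<^sup>*" "(p, b) \<in> ET"
        by (auto dest: tranclD2)
      moreover have "p = a"
        using parent root step.hyps(2) \<open>(p, b) \<in> ET\<close> ET by blast
      ultimately show False using step.IH step.hyps(2) by (meson rtrancl_into_trancl2)
    qed
  qed
qed

lemma haven_descends_to_child:
  assumes td: "is_dir_tree_decomp G VT ET X W" and fin: "finite (verts G)"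
    and hv: "haven G k \<beta>" and small: "\<forall>r\<in>VT. card (tree_bag ET X W r) \<le> k"
    and r: "r \<in> VT" and inside: "\<beta> (tree_bag ET X W r) \<subseteq> subtree_union VT ET W r"
  shows "\<exists>c. (r, c) \<in> ET \<and> \<beta> (tree_bag ET X W c) \<subseteq> subtree_union VT ET W c"
proof -
  let ?B = "tree_bag ET X W" and ?S = "subtree_union VT ET W"
  have ET: "ET \<subseteq> VT \<times> VT"
    using is_dir_tree_decompD(1)[OF td] unfolding is_out_tree_def by blast
  note Xv = is_dir_tree_decompD(2)[OF td] and normal = is_dir_tree_decompD(5)[OF td]
  have B_ok: "?B s \<subseteq> verts G" "card (?B s) \<le> k" if "s \<in> VT" for s
    using tree_bag_subset_verts[OF td that] small that by blast+
  obtain x where x: "x \<in> \<beta> (?B r)"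
    using havenD(1)[OF hv B_ok[OF r]] by blast
  then obtain s where s: "s \<in> VT" "(r, s) \<in> ET\<^sup>*" "x \<in> W s"
    using inside unfolding subtree_union_def by blast
  have "x \<notin> W r"
    using x havenD(2)[OF hv B_ok[OF r]] unfolding tree_bag_def by blast
  then obtain c where c: "(r, c) \<in> ET" "(c, s) \<in> ET\<^sup>*"
    using s by (metis converse_rtranclE)
  have x_below_c: "x \<in> ?S c"
    using s c unfolding subtree_union_def by blast
  have cV: "c \<in> VT" using c ET by blast
  have X_sub: "X (r, c) \<subseteq> ?B r" "X (r, c) \<subseteq> ?B c"
    using c unfolding tree_bag_def by force+
  have X_ok: "X (r, c) \<subseteq> verts G" "card (X (r, c)) \<le> k"
    using Xv[OF c(1)] card_mono[OF finite_subset[OF B_ok(1)[OF r] fin] X_sub(1)] B_ok(2)[OF r] by auto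
  have "\<beta> (X (r, c)) \<subseteq> ?S c \<or> \<beta> (X (r, c)) \<inter> ?S c = {}"
    using Z_normal_strongly_connected_subset_or_disjoint[OF normal[OF c(1)]] havenD(2,3)[OF hv X_ok]
    by blast
  moreover have "\<beta> (?B r) \<subseteq> \<beta> (X (r, c))" "\<beta> (?B c) \<subseteq> \<beta> (X (r, c))"
    using haven_antimono[OF hv] B_ok r cV X_sub by blast+
  ultimately show ?thesis
    using c(1) x x_below_c by blast
qed

lemma haven_large_tree_bag:
  assumes td: "is_dir_tree_decomp G VT ET X W" and fin: "finite (verts G)" and hv: "haven G k \<beta>"
  shows "\<exists>r\<in>VT. k < card (tree_bag ET X W r)"
proof (rule ccontr)
  assume "\<not> ?thesis"
  then have small: "\<forall>r\<in>VT. card (tree_bag ET X W r) \<le> k" by (simp add: not_less)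
  have tree: "is_out_tree VT ET"
    using td unfolding is_dir_tree_decomp_def by blast
  then obtain root where root: "root \<in> VT" "\<forall>v\<in>VT. (root, v) \<in> ET\<^sup>*" and ET: "ET \<subseteq> VT \<times> VT"
    and "finite VT"
    unfolding is_out_tree_def by blast
  then have "finite ET"
    using finite_subset by blast
  then have "wf (ET\<inverse>)"
    using finite_acyclic_wf_converse out_tree_acyclic[OF tree] by blast
  then have "r \<in> VT \<longrightarrow> \<not> \<beta> (tree_bag ET X W r) \<subseteq> subtree_union VT ET W r" for r
  proof (induction r)
    case (less r)
    then show ?case
      using haven_descends_to_child[OF td fin hv small] ET by blast
  qed
  moreover have "subtree_union VT ET W root = verts G"
    using is_dir_tree_decompD(4)[OF td] root unfolding subtree_union_def by blast
  ultimately show False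
    using havenD(1,2)[OF hv tree_bag_subset_verts[OF td root(1)]] small root(1) by blast
qed

lemma haven_le_tree_decomp_width:
  assumes td: "is_dir_tree_decomp G VT ET X W" and fin: "finite (verts G)" and hv: "haven G k \<beta>"
  shows "k \<le> tree_decomp_width VT ET X W"
proof -
  obtain r where r: "r \<in> VT" "k < card (tree_bag ET X W r)"
    using haven_large_tree_bag[OF assms] by blast
  have "finite VT"
    using td unfolding is_dir_tree_decomp_def is_out_tree_def by blast
  then have "card (tree_bag ET X W r) \<le> Max ((\<lambda>r. card (tree_bag ET X W r)) ` VT)"
    using r(1) by simp
  then show ?thesis
    using r(2) unfolding tree_decomp_width_eq by linarith
qed

section \<open>From path-decompositions to tree-decompositions\<close>

lemma Union_path_decomp: "is_dir_path_decomp G Xs \<Longrightarrow> (\<Union>X\<in>set Xs. X) = verts G"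
  unfolding is_dir_path_decomp_def by (elim conjE)

lemma is_dir_path_decompD:
  assumes "is_dir_path_decomp G Xs"
  shows "i < length Xs \<Longrightarrow> Xs ! i \<subseteq> verts G"
    and "v \<in> verts G \<Longrightarrow> \<exists>i<length Xs. v \<in> Xs ! i"
    and "(u, v) \<in> arcs G \<Longrightarrow> \<exists>i<length Xs. \<exists>j<length Xs. i \<le> j \<and> u \<in> Xs ! i \<and> v \<in> Xs ! j"
    and "i \<le> j \<Longrightarrow> j \<le> k \<Longrightarrow> k < length Xs \<Longrightarrow> v \<in> Xs ! i \<Longrightarrow> v \<in> Xs ! k \<Longrightarrow> v \<in> Xs ! j"
proof -
  note pd = assms[unfolded is_dir_path_decomp_def]
  have arcs: "\<forall>(u, v)\<in>arcs G. \<exists>i<length Xs. \<exists>j<length Xs. i \<le> j \<and> u \<in> Xs ! i \<and> v \<in> Xs ! j"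
    using pd by (elim conjE)
  have interval: "\<forall>v i j k. i \<le> j \<and> j \<le> k \<and> k < length Xs \<and> v \<in> Xs ! i \<and> v \<in> Xs ! k \<longrightarrow> v \<in> Xs ! j"
    using pd by (elim conjE)
  show "i < length Xs \<Longrightarrow> Xs ! i \<subseteq> verts G"
    using Union_path_decomp[OF assms] nth_mem by blast
  show "v \<in> verts G \<Longrightarrow> \<exists>i<length Xs. v \<in> Xs ! i"
    using Union_path_decomp[OF assms, symmetric] by (auto simp: in_set_conv_nth)
  show "(u, v) \<in> arcs G \<Longrightarrow> \<exists>i<length Xs. \<exists>j<length Xs. i \<le> j \<and> u \<in> Xs ! i \<and> v \<in> Xs ! j"
    using arcs by blast
  show "i \<le> j \<Longrightarrow> j \<le> k \<Longrightarrow> k < length Xs \<Longrightarrow> v \<in> Xs ! i \<Longrightarrow> v \<in> Xs ! k \<Longrightarrow> v \<in> Xs ! j"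
    using interval by blast
qed

lemma is_dir_path_decompI:
  assumes "(\<Union>X\<in>set Xs. X) = verts G"
    and "\<And>u v. (u, v) \<in> arcs G \<Longrightarrow> \<exists>i<length Xs. \<exists>j<length Xs. i \<le> j \<and> u \<in> Xs ! i \<and> v \<in> Xs ! j"
    and "\<And>v i j k. i \<le> j \<Longrightarrow> j \<le> k \<Longrightarrow> k < length Xs \<Longrightarrow> v \<in> Xs ! i \<Longrightarrow> v \<in> Xs ! k \<Longrightarrow> v \<in> Xs ! j"
  shows "is_dir_path_decomp G Xs"
  unfolding is_dir_path_decomp_def
proof (intro conjI ballI allI impI)
  show "X \<subseteq> verts G" if "X \<in> set Xs" for X
    using assms(1) that by blast
  show "(\<Union>X\<in>set Xs. X) = verts G" by (fact assms(1))
qed (use assms(2,3) in blast)+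

lemma path_decomp_nonempty: "is_dir_path_decomp G Xs \<Longrightarrow> verts G \<noteq> {} \<Longrightarrow> Xs \<noteq> []"
  using is_dir_path_decompD(2) by fastforce

lemma path_decomp_suffix_Z_normal:
  assumes pd: "is_dir_path_decomp G Xs" and ab: "a < b" "b < length Xs"
    and gap: "\<And>v j. j < b \<Longrightarrow> v \<in> Xs ! j \<Longrightarrow> \<exists>i\<le>a. v \<in> Xs ! i"
  shows "Z_normal G (Xs ! a \<inter> Xs ! b) {v \<in> verts G. \<forall>j<b. v \<notin> Xs ! j}"
proof (rule Z_normal_if_out_closed)
  fix p q
  assume pq: "(p, q) \<in> arcs G" and p: "p \<in> {v \<in> verts G. \<forall>j<b. v \<notin> Xs ! j}"
    and q: "q \<in> verts G - Xs ! a \<inter> Xs ! b"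
  show "q \<in> {v \<in> verts G. \<forall>j<b. v \<notin> Xs ! j}"
  proof (rule ccontr)
    assume "\<not> ?thesis"
    then obtain j0 where "j0 < b" "q \<in> Xs ! j0" using q by blast
    then obtain i0 where i0: "i0 \<le> a" "q \<in> Xs ! i0" using gap by blast
    obtain i j where ij: "i \<le> j" "j < length Xs" "p \<in> Xs ! i" "q \<in> Xs ! j"
      using is_dir_path_decompD(3)[OF pd pq] by blast
    have "b \<le> i"
    proof (rule ccontr)
      assume "\<not> b \<le> i"
      then show False using p ij(3) by simp
    qed
    have between: "q \<in> Xs ! l" if "i0 \<le> l" "l \<le> j" for l
      using is_dir_path_decompD(4)[OF pd that ij(2) i0(2) ij(4)] .
    have "a \<le> j" "b \<le> j" using ab(1) \<open>b \<le> i\<close> ij(1) by linarith+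
    then have "q \<in> Xs ! a" "q \<in> Xs ! b"
      using between i0(1) ab(1) by auto
    then show False using q by blast
  qed
qed

definition consecutive_pairs :: "nat set \<Rightarrow> (nat \<times> nat) set" where
  "consecutive_pairs I = {(a, b). a \<in> I \<and> b \<in> I \<and> a < b \<and> (\<forall>c\<in>I. \<not> (a < c \<and> c < b))}"

lemma consecutive_pairs_predecessor:
  assumes "finite I" "a \<in> I" "b \<in> I" "a < b"
  shows "\<exists>u\<in>I. a \<le> u \<and> (u, b) \<in> consecutive_pairs I"
proof -
  let ?C = "{c \<in> I. c < b}"
  have C: "finite ?C" "a \<in> ?C" using assms by auto
  then have "Max ?C \<in> ?C" "a \<le> Max ?C"
    using Max_in[OF C(1)] Max_ge[OF C(1)] by blast+
  moreover have "c \<le> Max ?C" if "c \<in> I" "c < b" for c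
    using Max_ge[OF C(1)] that by blast
  ultimately show ?thesis
    using assms(3) unfolding consecutive_pairs_def
    by (intro bexI[of _ "Max ?C"]) (auto simp: not_less intro: leI)
qed

lemma rtrancl_consecutive_pairs_iff:
  assumes "finite I" "a \<in> I" "b \<in> I"
  shows "(a, b) \<in> (consecutive_pairs I)\<^sup>* \<longleftrightarrow> a \<le> b"
proof
  show "(a, b) \<in> (consecutive_pairs I)\<^sup>* \<Longrightarrow> a \<le> b"
    by (induction rule: rtrancl_induct) (auto simp: consecutive_pairs_def)
  show "a \<le> b \<Longrightarrow> (a, b) \<in> (consecutive_pairs I)\<^sup>*"
    using assms(3)
  proof (induction b rule: less_induct)
    case (less b)
    show ?case
    proof (cases "a = b")
      case False
      then have "a < b" using less.prems by simp
      then obtain u where u: "u \<in> I" "a \<le> u" "(u, b) \<in> consecutive_pairs I"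
        using consecutive_pairs_predecessor[OF assms(1,2) less.prems(2)] by blast
      then have "u < b" by (simp add: consecutive_pairs_def)
      then have "(a, u) \<in> (consecutive_pairs I)\<^sup>*" using less.IH u(1,2) by blast
      then show ?thesis using u(3) by simp
    qed simp
  qed
qed

lemma out_tree_consecutive_pairs:
  assumes fin: "finite I" and ne: "I \<noteq> {}"
  shows "is_out_tree I (consecutive_pairs I)"
proof -
  let ?E = "consecutive_pairs I" and ?r = "Min I"
  have root: "?r \<in> I" "\<forall>i\<in>I. ?r \<le> i" using fin ne by simp_all
  have parent: "\<exists>!u. (u, v) \<in> ?E" if v: "v \<in> I - {?r}" for v
  proof -
    have "?r < v" using root v by force
    then obtain u where u: "(u, v) \<in> ?E"
      using consecutive_pairs_predecessor[OF fin root(1)] v by blast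
    moreover have "u' = u" if "(u', v) \<in> ?E" for u'
    proof (rule ccontr)
      assume "u' \<noteq> u"
      then show False using u that unfolding consecutive_pairs_def by (auto simp: neq_iff)
    qed
    ultimately show ?thesis by blast
  qed
  have no_parent: "(u, ?r) \<notin> ?E" for u
    using root unfolding consecutive_pairs_def by auto
  have reach: "(?r, v) \<in> ?E\<^sup>*" if "v \<in> I" for v
    using rtrancl_consecutive_pairs_iff[OF fin root(1) that] root(2) that by blast
  have "?E \<subseteq> I \<times> I"
    unfolding consecutive_pairs_def by auto
  then show ?thesis
    unfolding is_out_tree_def
    using fin ne root(1) parent no_parent reach by (intro conjI bexI[of _ ?r] allI ballI)
qed

definition new_verts :: "'a set list \<Rightarrow> nat \<Rightarrow> 'a set" where
  "new_verts Xs i = {v \<in> Xs ! i. \<forall>j<i. v \<notin> Xs ! j}"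

definition new_bags :: "'a set list \<Rightarrow> nat set" where
  "new_bags Xs = {i. i < length Xs \<and> new_verts Xs i \<noteq> {}}"

definition bag_meet :: "'a set list \<Rightarrow> nat \<times> nat \<Rightarrow> 'a set" where
  "bag_meet Xs e = Xs ! fst e \<inter> Xs ! snd e"

lemma first_new_bag:
  assumes "j < length Xs" "v \<in> Xs ! j"
  shows "\<exists>f\<in>new_bags Xs. f \<le> j \<and> v \<in> new_verts Xs f"
proof -
  define f where "f = (LEAST i. v \<in> Xs ! i)"
  have "v \<in> Xs ! f" "f \<le> j" using assms unfolding f_def by (auto intro: LeastI Least_le)
  moreover have "\<forall>i<f. v \<notin> Xs ! i" unfolding f_def using not_less_Least by blast
  ultimately show ?thesis using assms unfolding new_bags_def new_verts_def by fastforce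
qed

lemma new_verts_subset_verts:
  assumes "is_dir_path_decomp G Xs" "i \<in> new_bags Xs"
  shows "new_verts Xs i \<subseteq> verts G"
proof -
  have "i < length Xs" using assms(2) unfolding new_bags_def by simp
  then show ?thesis using is_dir_path_decompD(1)[OF assms(1)] unfolding new_verts_def by blast
qed

lemma new_verts_cover:
  assumes "is_dir_path_decomp G Xs" "v \<in> verts G"
  shows "\<exists>f\<in>new_bags Xs. v \<in> new_verts Xs f"
proof -
  obtain j where "j < length Xs" "v \<in> Xs ! j" using is_dir_path_decompD(2)[OF assms] by blast
  then show ?thesis using first_new_bag[of j Xs v] by blast
qed

lemma finite_new_bags: "finite (new_bags Xs)"
  unfolding new_bags_def by simp

lemma new_bags_nonempty:
  assumes "is_dir_path_decomp G Xs" "verts G \<noteq> {}"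
  shows "new_bags Xs \<noteq> {}"
  using new_verts_cover[OF assms(1)] assms(2) by blast

lemma subtree_union_new_verts:
  assumes pd: "is_dir_path_decomp G Xs" and b: "b \<in> new_bags Xs"
  shows "subtree_union (new_bags Xs) (consecutive_pairs (new_bags Xs)) (new_verts Xs) b
           = {v \<in> verts G. \<forall>j<b. v \<notin> Xs ! j}"
proof (intro set_eqI iffI)
  fix v
  assume "v \<in> subtree_union (new_bags Xs) (consecutive_pairs (new_bags Xs)) (new_verts Xs) b"
  then obtain r where r: "r \<in> new_bags Xs" "(b, r) \<in> (consecutive_pairs (new_bags Xs))\<^sup>*"
    "v \<in> new_verts Xs r"
    unfolding subtree_union_def by blast
  then have "b \<le> r" using rtrancl_consecutive_pairs_iff[OF finite_new_bags b r(1)] by simp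
  then show "v \<in> {v \<in> verts G. \<forall>j<b. v \<notin> Xs ! j}"
    using r(3) new_verts_subset_verts[OF pd r(1)] unfolding new_verts_def by auto
next
  fix v
  assume v: "v \<in> {v \<in> verts G. \<forall>j<b. v \<notin> Xs ! j}"
  then obtain f where f: "f \<in> new_bags Xs" "v \<in> new_verts Xs f"
    using new_verts_cover[OF pd] by blast
  have "b \<le> f"
  proof (rule ccontr)
    assume "\<not> b \<le> f"
    then show False using v f(2) unfolding new_verts_def by simp
  qed
  then have "(b, f) \<in> (consecutive_pairs (new_bags Xs))\<^sup>*"
    using rtrancl_consecutive_pairs_iff[OF finite_new_bags b f(1)] by simp
  then show "v \<in> subtree_union (new_bags Xs) (consecutive_pairs (new_bags Xs)) (new_verts Xs) b"
    unfolding subtree_union_def using f by blast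
qed

lemma Z_normal_bag_meet:
  assumes pd: "is_dir_path_decomp G Xs" and ab: "(a, b) \<in> consecutive_pairs (new_bags Xs)"
  shows "Z_normal G (bag_meet Xs (a, b))
           (subtree_union (new_bags Xs) (consecutive_pairs (new_bags Xs)) (new_verts Xs) b)"
proof -
  have ab': "b \<in> new_bags Xs" "a < b" "\<forall>c\<in>new_bags Xs. \<not> (a < c \<and> c < b)"
    using ab unfolding consecutive_pairs_def by auto
  have b_len: "b < length Xs" using ab'(1) unfolding new_bags_def by simp
  have "\<exists>i\<le>a. v \<in> Xs ! i" if j: "j < b" "v \<in> Xs ! j" for v j
  proof -
    obtain f where f: "f \<in> new_bags Xs" "f \<le> j" "v \<in> new_verts Xs f"
      using first_new_bag j(2) j(1) b_len by (meson less_trans)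
    then have "f \<le> a" using ab'(3) j(1) by force
    moreover have "v \<in> Xs ! f" using f(3) unfolding new_verts_def by simp
    ultimately show ?thesis by blast
  qed
  then show ?thesis
    unfolding bag_meet_def subtree_union_new_verts[OF pd ab'(1)] fst_conv snd_conv
    by (rule path_decomp_suffix_Z_normal[OF pd ab'(2) b_len])
qed

lemma new_bags_tree_decomp:
  assumes pd: "is_dir_path_decomp G Xs" and ne: "verts G \<noteq> {}"
  shows "is_dir_tree_decomp G (new_bags Xs) (consecutive_pairs (new_bags Xs)) (bag_meet Xs) (new_verts Xs)"
  unfolding is_dir_tree_decomp_def
proof (intro conjI ballI impI)
  show "is_out_tree (new_bags Xs) (consecutive_pairs (new_bags Xs))"
    using out_tree_consecutive_pairs[OF finite_new_bags new_bags_nonempty[OF pd ne]] .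
  show "bag_meet Xs e \<subseteq> verts G" if "e \<in> consecutive_pairs (new_bags Xs)" for e
  proof -
    have "snd e < length Xs" using that unfolding consecutive_pairs_def new_bags_def by auto
    then show ?thesis using is_dir_path_decompD(1)[OF pd] unfolding bag_meet_def by blast
  qed
  show "new_verts Xs r \<inter> new_verts Xs s = {}" if "r \<noteq> s" for r s
    using that unfolding new_verts_def by (auto simp: neq_iff)
  show "(\<Union>r\<in>new_bags Xs. new_verts Xs r) = verts G"
    using new_verts_subset_verts[OF pd] new_verts_cover[OF pd] by blast
  show "case e of (u, v) \<Rightarrow> Z_normal G (bag_meet Xs (u, v))
          (\<Union>{new_verts Xs r |r. r \<in> new_bags Xs \<and> (v, r) \<in> (consecutive_pairs (new_bags Xs))\<^sup>*})"
    if "e \<in> consecutive_pairs (new_bags Xs)" for e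
    using Z_normal_bag_meet[OF pd] that unfolding subtree_union_def by auto
qed (use new_verts_subset_verts[OF pd] in \<open>auto simp: new_bags_def\<close>)

lemma new_bags_tree_decomp_width:
  assumes pd: "is_dir_path_decomp G Xs" and fin: "finite (verts G)" and ne: "verts G \<noteq> {}"
  shows "tree_decomp_width (new_bags Xs) (consecutive_pairs (new_bags Xs)) (bag_meet Xs) (new_verts Xs)
           \<le> path_decomp_width Xs"
proof -
  have "card (tree_bag (consecutive_pairs (new_bags Xs)) (bag_meet Xs) (new_verts Xs) r)
          \<le> Max (card ` set Xs)" if r: "r \<in> new_bags Xs" for r
  proof -
    have "r < length Xs" using r unfolding new_bags_def by simp
    moreover have "tree_bag (consecutive_pairs (new_bags Xs)) (bag_meet Xs) (new_verts Xs) r \<subseteq> Xs ! r"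
      unfolding tree_bag_def new_verts_def bag_meet_def by auto
    ultimately show ?thesis
      using is_dir_path_decompD(1)[OF pd] fin
      by (meson Max_ge card_mono finite_imageI finite_set finite_subset image_eqI le_trans nth_mem)
  qed
  then show ?thesis
    using finite_new_bags[of Xs] new_bags_nonempty[OF pd ne]
    unfolding tree_decomp_width_eq path_decomp_width_def by (simp add: diff_le_mono)
qed

lemma dpw_le_path_decomp_width:
  "is_dir_path_decomp G Xs \<Longrightarrow> dpw G \<le> path_decomp_width Xs"
  unfolding dpw_def by (rule Least_le) blast

lemma dpw_attained:
  assumes "is_dir_path_decomp G Xs"
  obtains Ys where "is_dir_path_decomp G Ys" "path_decomp_width Ys = dpw G"
  using LeastI_ex[of "\<lambda>w. \<exists>Ys. is_dir_path_decomp G Ys \<and> path_decomp_width Ys = w"] assms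
  unfolding dpw_def by blast

lemma dtw_le_dpw:
  assumes "is_dir_path_decomp G Xs" "finite (verts G)" "verts G \<noteq> {}"
  shows "dtw G \<le> dpw G"
proof -
  obtain Ys where Ys: "is_dir_path_decomp G Ys" "path_decomp_width Ys = dpw G"
    using dpw_attained[OF assms(1)] .
  let ?VT = "new_bags Ys" and ?ET = "consecutive_pairs (new_bags Ys)"
  have "dtw G \<le> tree_decomp_width ?VT ?ET (bag_meet Ys) (new_verts Ys)"
    unfolding dtw_def by (rule Least_le) (use new_bags_tree_decomp[OF Ys(1) assms(3)] in blast)
  then show ?thesis
    using new_bags_tree_decomp_width[OF Ys(1) assms(2,3)] Ys(2) by linarith
qed

lemma haven_le_dtw:
  assumes "haven G k \<beta>" "finite (verts G)" "is_dir_tree_decomp G VT ET X W"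
  shows "k \<le> dtw G"
proof -
  obtain VT' ET' X' W' where "is_dir_tree_decomp G VT' ET' X' W'"
    "tree_decomp_width VT' ET' X' W' = dtw G"
    using LeastI_ex[of "\<lambda>w. \<exists>VT ET X W. is_dir_tree_decomp G VT ET X W \<and> tree_decomp_width VT ET X W = w"]
      assms(3) unfolding dtw_def by blast
  then show ?thesis
    using haven_le_tree_decomp_width assms(1,2) by metis
qed

definition width_certificate :: "'a digraph \<Rightarrow> nat \<Rightarrow> 'a set list \<Rightarrow> ('a set \<Rightarrow> 'a set) \<Rightarrow> bool" where
  "width_certificate G k Xs \<beta> \<longleftrightarrow>
     is_dir_path_decomp G Xs \<and> (\<forall>X\<in>set Xs. card X \<le> Suc k) \<and> haven G k \<beta>"

lemma dpw_eq_dtw_if_width_certificate: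
  assumes cert: "width_certificate G k Xs \<beta>" and fin: "finite (verts G)" and ne: "verts G \<noteq> {}"
  shows "dpw G = dtw G"
proof -
  have pd: "is_dir_path_decomp G Xs" and bags: "\<forall>X\<in>set Xs. card X \<le> Suc k" and hv: "haven G k \<beta>"
    using cert unfolding width_certificate_def by blast+
  have "Xs \<noteq> []" using path_decomp_nonempty[OF pd ne] .
  then have "path_decomp_width Xs \<le> k"
    using bags unfolding path_decomp_width_def by (simp add: le_diff_conv)
  then have "dpw G \<le> k" using dpw_le_path_decomp_width[OF pd] by linarith
  moreover have "k \<le> dtw G"
    using haven_le_dtw[OF hv fin new_bags_tree_decomp[OF pd ne]] .
  moreover have "dtw G \<le> dpw G" using dtw_le_dpw[OF pd fin ne] .
  ultimately show ?thesis by linarith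
qed

section \<open>Combining path-decompositions and havens\<close>

lemma path_decomp_append:
  assumes pd1: "is_dir_path_decomp G1 Xs1" and pd2: "is_dir_path_decomp G2 Xs2"
    and disj: "verts G1 \<inter> verts G2 = {}" and V: "verts G = verts G1 \<union> verts G2"
    and A: "arcs G \<subseteq> arcs G1 \<union> arcs G2 \<union> verts G1 \<times> verts G2"
  shows "is_dir_path_decomp G (Xs1 @ Xs2)"
proof (rule is_dir_path_decompI)
  let ?l = "length Xs1"
  note D1 = is_dir_path_decompD[OF pd1] and D2 = is_dir_path_decompD[OF pd2]
  show "(\<Union>X\<in>set (Xs1 @ Xs2). X) = verts G"
    using Union_path_decomp[OF pd1] Union_path_decomp[OF pd2] V by simp
  show "\<exists>i<length (Xs1 @ Xs2). \<exists>j<length (Xs1 @ Xs2). i \<le> j \<and> u \<in> (Xs1 @ Xs2) ! i \<and> v \<in> (Xs1 @ Xs2) ! j"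
    if uv: "(u, v) \<in> arcs G" for u v
  proof -
    consider "(u, v) \<in> arcs G1" | "(u, v) \<in> arcs G2" | "u \<in> verts G1" "v \<in> verts G2"
      using uv A by blast
    then show ?thesis
    proof cases
      case 1
      then obtain i j where "i \<le> j" "j < ?l" "u \<in> Xs1 ! i" "v \<in> Xs1 ! j" using D1(3) by blast
      then show ?thesis by (intro exI[of _ i] conjI exI[of _ j]) (simp_all add: nth_append)
    next
      case 2
      then obtain i j where "i \<le> j" "j < length Xs2" "u \<in> Xs2 ! i" "v \<in> Xs2 ! j" using D2(3) by blast
      then show ?thesis by (intro exI[of _ "?l + i"] conjI exI[of _ "?l + j"]) (simp_all add: nth_append)
    next
      case 3
      then obtain i j where "i < ?l" "u \<in> Xs1 ! i" "j < length Xs2" "v \<in> Xs2 ! j"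
        using D1(2) D2(2) by blast
      then show ?thesis by (intro exI[of _ i] conjI exI[of _ "?l + j"]) (simp_all add: nth_append)
    qed
  qed
  show "v \<in> (Xs1 @ Xs2) ! j"
    if ij: "i \<le> j" "j \<le> k" "k < length (Xs1 @ Xs2)" and v: "v \<in> (Xs1 @ Xs2) ! i" "v \<in> (Xs1 @ Xs2) ! k"
    for v i j k
  proof (cases "k < ?l")
    case True
    then show ?thesis using D1(4)[of i j k v] ij v by (simp add: nth_append)
  next
    case k: False
    have "k - ?l < length Xs2" using ij(3) k by simp
    then have "v \<in> verts G2" using D2(1) v(2) k by (auto simp: nth_append)
    have "\<not> i < ?l"
    proof
      assume "i < ?l"
      then have "v \<in> verts G1" using D1(1) v(1) by (auto simp: nth_append)
      then show False using \<open>v \<in> verts G2\<close> disj by blast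
    qed
    then show ?thesis using D2(4)[of "i - ?l" "j - ?l" "k - ?l" v] ij v k by (simp add: nth_append)
  qed
qed

lemma path_decomp_extend_bags:
  assumes pd: "is_dir_path_decomp G1 Xs1" and ne: "Xs1 \<noteq> []"
    and V: "verts G = verts G1 \<union> A"
    and arcs: "arcs G \<subseteq> arcs G1 \<union> verts G \<times> A \<union> A \<times> verts G"
  shows "is_dir_path_decomp G (map (\<lambda>X. X \<union> A) Xs1)"
proof (rule is_dir_path_decompI)
  let ?Ys = "map (\<lambda>X. X \<union> A) Xs1"
  note D = is_dir_path_decompD[OF pd]
  have len: "length ?Ys = length Xs1" by simp
  have nth: "i < length Xs1 \<Longrightarrow> ?Ys ! i = Xs1 ! i \<union> A" for i by simp
  have in_some_bag: "\<exists>i<length Xs1. v \<in> ?Ys ! i" if "v \<in> verts G" for v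
  proof (cases "v \<in> A")
    case True
    then show ?thesis using ne nth[of 0] by auto
  next
    case False
    then have "v \<in> verts G1" using that V by simp
    then obtain i where "i < length Xs1" "v \<in> Xs1 ! i" using D(2) by blast
    then show ?thesis using nth by auto
  qed
  show "(\<Union>X\<in>set ?Ys. X) = verts G"
    using Union_path_decomp[OF pd] V ne by auto
  show "\<exists>i<length ?Ys. \<exists>j<length ?Ys. i \<le> j \<and> u \<in> ?Ys ! i \<and> v \<in> ?Ys ! j"
    if uv: "(u, v) \<in> arcs G" for u v
  proof (cases "(u, v) \<in> arcs G1")
    case True
    then obtain i j where "i \<le> j" "j < length Xs1" "u \<in> Xs1 ! i" "v \<in> Xs1 ! j"
      using D(3) by blast
    then show ?thesis using nth by (intro exI[of _ i] conjI exI[of _ j]) auto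
  next
    case False
    then have uv': "u \<in> verts G" "v \<in> verts G" "u \<in> A \<or> v \<in> A" using uv arcs V by auto
    have "\<exists>i<length Xs1. u \<in> ?Ys ! i \<and> v \<in> ?Ys ! i"
    proof (cases "u \<in> A")
      case True
      obtain j where "j < length Xs1" "v \<in> ?Ys ! j" using in_some_bag uv'(2) by blast
      then show ?thesis using True nth by auto
    next
      case False
      obtain i where "i < length Xs1" "u \<in> ?Ys ! i" using in_some_bag uv'(1) by blast
      then show ?thesis using False uv'(3) nth by auto
    qed
    then show ?thesis unfolding len by blast
  qed
  show "v \<in> ?Ys ! j"
    if "i \<le> j" "j \<le> k" "k < length ?Ys" "v \<in> ?Ys ! i" "v \<in> ?Ys ! k" for v i j k
    using that D(4)[of i j k v] by auto
qed

lemma haven_restrict_at: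
  assumes hv: "haven H k \<beta>" and VH: "verts H \<subseteq> verts G" and AH: "arcs H \<subseteq> arcs G"
    and card: "card (Z \<inter> verts H) \<le> k"
  shows "\<beta> (Z \<inter> verts H) \<noteq> {}" "\<beta> (Z \<inter> verts H) \<subseteq> verts G - Z"
    "strongly_connected_avoiding G Z (\<beta> (Z \<inter> verts H))"
proof -
  note D = havenD[OF hv Int_lower2 card]
  show "\<beta> (Z \<inter> verts H) \<noteq> {}" by (fact D(1))
  show "\<beta> (Z \<inter> verts H) \<subseteq> verts G - Z" using D(2) VH by blast
  show "strongly_connected_avoiding G Z (\<beta> (Z \<inter> verts H))"
    using D(3) walk_avoiding_subgraph[OF _ VH AH]
    unfolding strongly_connected_avoiding_def by metis
qed

lemma haven_restrict:
  assumes hv: "haven H k \<beta>" and VH: "verts H \<subseteq> verts G" and AH: "arcs H \<subseteq> arcs G"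
    and fin: "finite (verts G)"
  shows "haven G k (\<lambda>Z. \<beta> (Z \<inter> verts H))"
proof -
  have card: "card (Z \<inter> verts H) \<le> k" if "Z \<subseteq> verts G" "card Z \<le> k" for Z
    using that fin card_mono[of Z "Z \<inter> verts H"] finite_subset by fastforce
  show ?thesis
    unfolding haven_def
    using haven_restrict_at[OF hv VH AH card] haven_antimono[OF hv Int_lower2 card]
    by (meson Int_mono order_refl)
qed

lemma strongly_connected_avoiding_biclique:
  assumes V: "verts G = V1 \<union> V2" and A12: "V1 \<times> V2 \<subseteq> arcs G" and A21: "V2 \<times> V1 \<subseteq> arcs G"
    and a: "a \<in> V1 - Z" and b: "b \<in> V2 - Z"
  shows "strongly_connected_avoiding G Z (verts G - Z)"
  unfolding strongly_connected_avoiding_def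
proof (intro ballI)
  fix x y assume x: "x \<in> verts G - Z" and y: "y \<in> verts G - Z"
  have "walk_avoiding G Z [x, y] \<or> walk_avoiding G Z [x, a, y] \<or> walk_avoiding G Z [x, b, y]"
    using x y a b A12 A21 V by (auto simp: walk_avoiding_Cons_Cons walk_avoiding_singleton)
  then show "\<exists>ws. walk_avoiding G Z ws \<and> hd ws = x \<and> last ws = y"
    by fastforce
qed

definition series_haven ::
  "'a set \<Rightarrow> 'a set \<Rightarrow> ('a set \<Rightarrow> 'a set) \<Rightarrow> ('a set \<Rightarrow> 'a set) \<Rightarrow> 'a set \<Rightarrow> 'a set" where
  "series_haven V1 V2 \<beta>1 \<beta>2 Z =
     (if V2 \<subseteq> Z then \<beta>1 (Z \<inter> V1) else if V1 \<subseteq> Z then \<beta>2 (Z \<inter> V2) else (V1 \<union> V2) - Z)"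

context
  fixes G G1 G2 :: "'a digraph" and k1 k2 :: nat and \<beta>1 \<beta>2 :: "'a set \<Rightarrow> 'a set"
  assumes fin1: "finite (verts G1)" and fin2: "finite (verts G2)"
    and disj: "verts G1 \<inter> verts G2 = {}" and V: "verts G = verts G1 \<union> verts G2"
    and A1: "arcs G1 \<subseteq> arcs G" and A2: "arcs G2 \<subseteq> arcs G"
    and A12: "verts G1 \<times> verts G2 \<subseteq> arcs G" and A21: "verts G2 \<times> verts G1 \<subseteq> arcs G"
    and h1: "haven G1 k1 \<beta>1" and h2: "haven G2 k2 \<beta>2"
    and le: "k1 + card (verts G2) \<le> k2 + card (verts G1)"
begin

lemma series_separator_card:
  assumes Z: "Z \<subseteq> verts G" "card Z \<le> k1 + card (verts G2)"
  shows "verts G2 \<subseteq> Z \<Longrightarrow> card (Z \<inter> verts G1) \<le> k1"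
    and "verts G1 \<subseteq> Z \<Longrightarrow> card (Z \<inter> verts G2) \<le> k2"
    and "\<not> (verts G1 \<subseteq> Z \<and> verts G2 \<subseteq> Z)"
proof -
  have "Z = (Z \<inter> verts G1) \<union> (Z \<inter> verts G2)" using Z(1) V by blast
  then have split: "card Z = card (Z \<inter> verts G1) + card (Z \<inter> verts G2)"
    using fin1 fin2 disj card_Un_disjoint
    by (metis (no_types, lifting) Int_assoc Int_commute Int_empty_right finite_Int)
  have "k1 < card (verts G1)" using haven_order_less_card[OF h1] .
  then show "verts G2 \<subseteq> Z \<Longrightarrow> card (Z \<inter> verts G1) \<le> k1"
    and "verts G1 \<subseteq> Z \<Longrightarrow> card (Z \<inter> verts G2) \<le> k2"
    and "\<not> (verts G1 \<subseteq> Z \<and> verts G2 \<subseteq> Z)"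
    using split Z(2) le by (auto simp: Int_absorb1)
qed

lemma series_haven_at:
  assumes Z: "Z \<subseteq> verts G" "card Z \<le> k1 + card (verts G2)"
  shows "series_haven (verts G1) (verts G2) \<beta>1 \<beta>2 Z \<noteq> {} \<and>
    series_haven (verts G1) (verts G2) \<beta>1 \<beta>2 Z \<subseteq> verts G - Z \<and>
    strongly_connected_avoiding G Z (series_haven (verts G1) (verts G2) \<beta>1 \<beta>2 Z)"
proof -
  have VG1: "verts G1 \<subseteq> verts G" and VG2: "verts G2 \<subseteq> verts G" using V by auto
  consider "verts G2 \<subseteq> Z" | "\<not> verts G2 \<subseteq> Z" "verts G1 \<subseteq> Z"
    | "\<not> verts G1 \<subseteq> Z" "\<not> verts G2 \<subseteq> Z" by blast
  then show ?thesis
  proof cases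
    case 1
    then show ?thesis
      using haven_restrict_at[OF h1 VG1 A1 series_separator_card(1)[OF Z 1]]
      unfolding series_haven_def by simp
  next
    case 2
    then show ?thesis
      using haven_restrict_at[OF h2 VG2 A2 series_separator_card(2)[OF Z 2(2)]]
      unfolding series_haven_def by simp
  next
    case 3
    then obtain a b where "a \<in> verts G1 - Z" "b \<in> verts G2 - Z" by blast
    then show ?thesis
      using 3 strongly_connected_avoiding_biclique[OF V A12 A21] V
      unfolding series_haven_def by auto
  qed
qed

lemma haven_series: "haven G (k1 + card (verts G2)) (series_haven (verts G1) (verts G2) \<beta>1 \<beta>2)"
proof -
  let ?\<beta> = "series_haven (verts G1) (verts G2) \<beta>1 \<beta>2"
  have "?\<beta> Z \<subseteq> ?\<beta> Z'" if Z: "Z \<subseteq> verts G" "card Z \<le> k1 + card (verts G2)" and Z': "Z' \<subseteq> Z"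
    for Z Z'
  proof -
    note card = series_separator_card[OF Z]
    consider "verts G2 \<subseteq> Z'" | "\<not> verts G2 \<subseteq> Z'" "verts G1 \<subseteq> Z'"
      | "\<not> verts G1 \<subseteq> Z'" "\<not> verts G2 \<subseteq> Z'" by blast
    then show ?thesis
    proof cases
      case 1
      then have "verts G2 \<subseteq> Z" using Z' by blast
      then show ?thesis
        using 1 haven_antimono[OF h1 Int_lower2 card(1), of "Z' \<inter> verts G1"] Z'
        unfolding series_haven_def by auto
    next
      case 2
      then have "verts G1 \<subseteq> Z" using Z' by blast
      then show ?thesis
        using 2 card(3) haven_antimono[OF h2 Int_lower2 card(2), of "Z' \<inter> verts G2"] Z'
        unfolding series_haven_def by auto
    next
      case 3
      then have "?\<beta> Z' = verts G - Z'" unfolding series_haven_def V by simp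
      then show ?thesis using series_haven_at[OF Z] Z' by blast
    qed
  qed
  then show ?thesis
    unfolding haven_def using series_haven_at by blast
qed

end

section \<open>Directed co-graphs\<close>

lemma verts_order_comp [simp]: "verts (order_comp Gs) = (\<Union>H\<in>set Gs. verts H)"
  and verts_series_comp [simp]: "verts (series_comp Gs) = (\<Union>H\<in>set Gs. verts H)"
  by (simp_all add: verts_def order_comp_def series_comp_def)

lemma compositions_singleton:
  "disj_union [G] = G" "order_comp [G] = G" "series_comp [G] = G"
  by (simp_all add: disj_union_def order_comp_def series_comp_def verts_def arcs_def)

definition forward_pairs :: "'a digraph list \<Rightarrow> ('a \<times> 'a) set" where
  "forward_pairs Gs = {(u, v). \<exists>i<length Gs. \<exists>j<length Gs. i < j \<and> u \<in> verts (Gs ! i) \<and> v \<in> verts (Gs ! j)}"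

lemma forward_pairs_Cons:
  "forward_pairs (G # Gs) = verts G \<times> (\<Union>H\<in>set Gs. verts H) \<union> forward_pairs Gs"
proof (intro set_eqI iffI)
  fix p assume "p \<in> forward_pairs (G # Gs)"
  then obtain u v i j where p: "p = (u, v)" and ij: "i < j" "j < Suc (length Gs)"
    and uv: "u \<in> verts ((G # Gs) ! i)" "v \<in> verts ((G # Gs) ! j)"
    unfolding forward_pairs_def by auto
  obtain j' where j: "j = Suc j'" using ij(1) by (cases j) auto
  show "p \<in> verts G \<times> (\<Union>H\<in>set Gs. verts H) \<union> forward_pairs Gs"
  proof (cases i)
    case 0
    then show ?thesis using p uv j ij(2) by auto
  next
    case (Suc i')
    then show ?thesis using p uv j ij unfolding forward_pairs_def by auto
  qed
next
  fix p assume "p \<in> verts G \<times> (\<Union>H\<in>set Gs. verts H) \<union> forward_pairs Gs"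
  then consider u v j where "p = (u, v)" "u \<in> verts G" "j < length Gs" "v \<in> verts (Gs ! j)"
    | u v i j where "p = (u, v)" "i < j" "j < length Gs" "u \<in> verts (Gs ! i)" "v \<in> verts (Gs ! j)"
    unfolding forward_pairs_def by (auto simp: in_set_conv_nth)
  then show "p \<in> forward_pairs (G # Gs)"
  proof cases
    case (1 u v j)
    then show ?thesis unfolding forward_pairs_def
      by (simp only: mem_Collect_eq case_prod_conv) (intro exI[of _ 0] conjI exI[of _ "Suc j"]; simp)
  next
    case (2 u v i j)
    then show ?thesis unfolding forward_pairs_def
      by (simp only: mem_Collect_eq case_prod_conv) (intro exI[of _ "Suc i"] conjI exI[of _ "Suc j"]; simp)
  qed
qed

lemma arcs_order_comp: "arcs (order_comp Gs) = (\<Union>H\<in>set Gs. arcs H) \<union> forward_pairs Gs"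
  by (simp add: order_comp_def arcs_def forward_pairs_def)

lemma arcs_series_comp:
  "arcs (series_comp Gs) = (\<Union>H\<in>set Gs. arcs H) \<union> forward_pairs Gs \<union> (forward_pairs Gs)\<inverse>"
proof -
  have "i \<noteq> j \<longleftrightarrow> i < j \<or> j < i" for i j :: nat by arith
  then show ?thesis
    unfolding series_comp_def arcs_def forward_pairs_def by (simp add: set_eq_iff) blast
qed

definition certified_digraph :: "'a digraph \<Rightarrow> bool" where
  "certified_digraph G \<longleftrightarrow> is_digraph G \<and> verts G \<noteq> {} \<and> (\<exists>k Xs \<beta>. width_certificate G k Xs \<beta>)"

lemma certified_digraphD:
  assumes "certified_digraph G"
  obtains k Xs \<beta> where "is_digraph G" "verts G \<noteq> {}" "finite (verts G)" "width_certificate G k Xs \<beta>"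
  using assms unfolding certified_digraph_def is_digraph_def by blast

lemma is_digraph_join:
  assumes "is_digraph G1" "is_digraph G2" "verts G1 \<inter> verts G2 = {}"
    and "verts G = verts G1 \<union> verts G2"
    and "arcs G \<subseteq> arcs G1 \<union> arcs G2 \<union> verts G1 \<times> verts G2 \<union> verts G2 \<times> verts G1"
  shows "is_digraph G"
  using assms unfolding is_digraph_def by auto

lemma certified_digraph_singleton: "certified_digraph ({v}, {})"
proof -
  have "haven ({v}, {}) 0 (\<lambda>Z. {v})"
    unfolding haven_def strongly_connected_avoiding_def
    by (auto simp: verts_def walk_avoiding_singleton subset_singleton_iff intro!: exI[of _ "[v]"])
  moreover have "is_dir_path_decomp ({v}, {}) [{v}]"
    unfolding is_dir_path_decomp_def by (simp add: verts_def arcs_def)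
  ultimately have "width_certificate ({v}, {}) 0 [{v}] (\<lambda>Z. {v})"
    unfolding width_certificate_def by simp
  then show ?thesis
    unfolding certified_digraph_def is_digraph_def by (auto simp: verts_def arcs_def)
qed

lemma certified_digraph_union:
  assumes c1: "certified_digraph G1" and c2: "certified_digraph G2"
    and disj: "verts G1 \<inter> verts G2 = {}" and V: "verts G = verts G1 \<union> verts G2"
    and arcs: "arcs G = arcs G1 \<union> arcs G2 \<union> A" and A: "A \<subseteq> verts G1 \<times> verts G2"
  shows "certified_digraph G"
proof -
  obtain k1 Xs1 \<beta>1 where g1: "is_digraph G1" "verts G1 \<noteq> {}" "finite (verts G1)"
    and w1: "width_certificate G1 k1 Xs1 \<beta>1"
    using c1 by (rule certified_digraphD)
  obtain k2 Xs2 \<beta>2 where g2: "is_digraph G2" "finite (verts G2)"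
    and w2: "width_certificate G2 k2 Xs2 \<beta>2"
    using c2 by (rule certified_digraphD)
  have fin: "finite (verts G)" using g1(3) g2(2) V by simp
  have VG1: "verts G1 \<subseteq> verts G" and VG2: "verts G2 \<subseteq> verts G" using V by auto
  have AG1: "arcs G1 \<subseteq> arcs G" and AG2: "arcs G2 \<subseteq> arcs G" using arcs by auto
  have "is_dir_path_decomp G (Xs1 @ Xs2)"
    using path_decomp_append[OF _ _ disj V] w1 w2 arcs A
    unfolding width_certificate_def by blast
  moreover have "\<forall>X\<in>set (Xs1 @ Xs2). card X \<le> Suc (max k1 k2)"
    using w1 w2 unfolding width_certificate_def by fastforce
  moreover obtain \<beta> where "haven G (max k1 k2) \<beta>"
  proof (cases "k1 \<le> k2")
    case True
    then show ?thesis
      using that haven_restrict[OF _ VG2 AG2 fin] w2 unfolding width_certificate_def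
      by (metis max_absorb2)
  next
    case False
    then show ?thesis
      using that haven_restrict[OF _ VG1 AG1 fin] w1 unfolding width_certificate_def
      by (metis max_def)
  qed
  moreover have "is_digraph G"
    using is_digraph_join[OF g1(1) g2(1) disj V] arcs A by blast
  ultimately show ?thesis
    unfolding certified_digraph_def width_certificate_def using g1(2) V by blast
qed

lemma width_certificate_series:
  assumes fin1: "finite (verts G1)" and fin2: "finite (verts G2)" and ne1: "verts G1 \<noteq> {}"
    and disj: "verts G1 \<inter> verts G2 = {}" and V: "verts G = verts G1 \<union> verts G2"
    and arcs: "arcs G = arcs G1 \<union> arcs G2 \<union> verts G1 \<times> verts G2 \<union> verts G2 \<times> verts G1"
    and G2: "arcs G2 \<subseteq> verts G2 \<times> verts G2"
    and w1: "width_certificate G1 k1 Xs1 \<beta>1" and h2: "haven G2 k2 \<beta>2"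
    and le: "k1 + card (verts G2) \<le> k2 + card (verts G1)"
  shows "\<exists>\<beta>. width_certificate G (k1 + card (verts G2)) (map (\<lambda>X. X \<union> verts G2) Xs1) \<beta>"
proof -
  have pd1: "is_dir_path_decomp G1 Xs1" and bags1: "\<forall>X\<in>set Xs1. card X \<le> Suc k1"
    and h1: "haven G1 k1 \<beta>1"
    using w1 unfolding width_certificate_def by blast+
  have "is_dir_path_decomp G (map (\<lambda>X. X \<union> verts G2) Xs1)"
    using path_decomp_extend_bags[OF pd1 path_decomp_nonempty[OF pd1 ne1] V] arcs G2 V by blast
  moreover have "\<forall>X\<in>set (map (\<lambda>X. X \<union> verts G2) Xs1). card X \<le> Suc (k1 + card (verts G2))"
    using bags1 card_Un_le by (fastforce intro: le_trans)
  moreover have "haven G (k1 + card (verts G2)) (series_haven (verts G1) (verts G2) \<beta>1 \<beta>2)"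
    using haven_series[OF fin1 fin2 disj V _ _ _ _ h1 h2 le] arcs by blast
  ultimately show ?thesis
    unfolding width_certificate_def by blast
qed

lemma certified_digraph_series:
  assumes c1: "certified_digraph G1" and c2: "certified_digraph G2"
    and disj: "verts G1 \<inter> verts G2 = {}" and V: "verts G = verts G1 \<union> verts G2"
    and arcs: "arcs G = arcs G1 \<union> arcs G2 \<union> verts G1 \<times> verts G2 \<union> verts G2 \<times> verts G1"
  shows "certified_digraph G"
proof -
  obtain k1 Xs1 \<beta>1 where g1: "is_digraph G1" "verts G1 \<noteq> {}" "finite (verts G1)"
    and w1: "width_certificate G1 k1 Xs1 \<beta>1"
    using c1 by (rule certified_digraphD)
  obtain k2 Xs2 \<beta>2 where g2: "is_digraph G2" "verts G2 \<noteq> {}" "finite (verts G2)"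
    and w2: "width_certificate G2 k2 Xs2 \<beta>2"
    using c2 by (rule certified_digraphD)
  have E1: "arcs G1 \<subseteq> verts G1 \<times> verts G1" and E2: "arcs G2 \<subseteq> verts G2 \<times> verts G2"
    using g1(1) g2(1) unfolding is_digraph_def by blast+
  have "\<exists>k Xs \<beta>. width_certificate G k Xs \<beta>"
  proof (cases "k1 + card (verts G2) \<le> k2 + card (verts G1)")
    case True
    then show ?thesis
      using width_certificate_series[OF g1(3) g2(3) g1(2) disj V arcs E2 w1] w2
      unfolding width_certificate_def by blast
  next
    case False
    have "verts G2 \<inter> verts G1 = {}" "verts G = verts G2 \<union> verts G1"
      "arcs G = arcs G2 \<union> arcs G1 \<union> verts G2 \<times> verts G1 \<union> verts G1 \<times> verts G2"
      using disj V arcs by blast+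
    then show ?thesis
      using width_certificate_series[OF g2(3) g1(3) g2(2) _ _ _ E1 w2] w1 False
      unfolding width_certificate_def by (meson nat_le_linear)
  qed
  moreover have "is_digraph G"
    using is_digraph_join[OF g1(1) g2(1) disj V] arcs by blast
  ultimately show ?thesis
    unfolding certified_digraph_def using g1(2) V by blast
qed

lemma pw_disjoint_ConsD:
  assumes "pw_disjoint (G # Gs)"
  shows "pw_disjoint Gs" "verts G \<inter> (\<Union>H\<in>set Gs. verts H) = {}"
proof -
  have disj: "verts ((G # Gs) ! i) \<inter> verts ((G # Gs) ! j) = {}"
    if "i < Suc (length Gs)" "j < Suc (length Gs)" "i \<noteq> j" for i j
    using assms that unfolding pw_disjoint_def by simp
  show "pw_disjoint Gs"
    unfolding pw_disjoint_def using disj[of "Suc _" "Suc _"] by simp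
  show "verts G \<inter> (\<Union>H\<in>set Gs. verts H) = {}"
  proof (intro equals0I)
    fix x assume "x \<in> verts G \<inter> (\<Union>H\<in>set Gs. verts H)"
    then obtain H where x: "x \<in> verts G" "x \<in> verts H" and "H \<in> set Gs" by blast
    then obtain j where "j < length Gs" "Gs ! j = H" by (meson in_set_conv_nth)
    then show False using disj[of 0 "Suc j"] x by auto
  qed
qed

lemma list_composition_preserves:
  assumes single: "\<And>G. f [G] = G"
    and cons: "\<And>G Gs. Gs \<noteq> [] \<Longrightarrow> P G \<Longrightarrow> P (f Gs) \<Longrightarrow>
       verts G \<inter> (\<Union>H\<in>set Gs. verts H) = {} \<Longrightarrow> P (f (G # Gs))"
  shows "Gs \<noteq> [] \<Longrightarrow> \<forall>G\<in>set Gs. P G \<Longrightarrow> pw_disjoint Gs \<Longrightarrow> P (f Gs)"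
proof (induction Gs)
  case (Cons G Gs)
  show ?case
  proof (cases "Gs = []")
    case True
    then show ?thesis using Cons.prems single by simp
  next
    case False
    then show ?thesis
      using Cons cons pw_disjoint_ConsD[OF Cons.prems(3)] by simp
  qed
qed simp

lemma certified_digraph_disj_union:
  "Gs \<noteq> [] \<Longrightarrow> \<forall>G\<in>set Gs. certified_digraph G \<Longrightarrow> pw_disjoint Gs \<Longrightarrow> certified_digraph (disj_union Gs)"
proof (rule list_composition_preserves)
  show "certified_digraph (disj_union (G # Gs))"
    if "certified_digraph G" "certified_digraph (disj_union Gs)"
      "verts G \<inter> (\<Union>H\<in>set Gs. verts H) = {}" for G Gs
    using certified_digraph_union[OF that(1,2), of _ "{}"] that(3)
    by (simp add: disj_union_def arcs_def verts_def)
qed (simp add: compositions_singleton)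

lemma certified_digraph_order_comp:
  "Gs \<noteq> [] \<Longrightarrow> \<forall>G\<in>set Gs. certified_digraph G \<Longrightarrow> pw_disjoint Gs \<Longrightarrow> certified_digraph (order_comp Gs)"
proof (rule list_composition_preserves)
  show "certified_digraph (order_comp (G # Gs))"
    if "certified_digraph G" "certified_digraph (order_comp Gs)"
      "verts G \<inter> (\<Union>H\<in>set Gs. verts H) = {}" for G Gs
    using certified_digraph_union[OF that(1,2), of _ "verts G \<times> verts (order_comp Gs)"] that(3)
    by (simp add: arcs_order_comp forward_pairs_Cons Un_ac)
qed (simp add: compositions_singleton)

lemma certified_digraph_series_comp:
  "Gs \<noteq> [] \<Longrightarrow> \<forall>G\<in>set Gs. certified_digraph G \<Longrightarrow> pw_disjoint Gs \<Longrightarrow> certified_digraph (series_comp Gs)"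
proof (rule list_composition_preserves)
  show "certified_digraph (series_comp (G # Gs))"
    if "certified_digraph G" "certified_digraph (series_comp Gs)"
      "verts G \<inter> (\<Union>H\<in>set Gs. verts H) = {}" for G Gs
    using certified_digraph_series[OF that(1,2)] that(3)
    by (simp add: arcs_series_comp forward_pairs_Cons converse_Un converse_Times Un_ac)
qed (simp add: compositions_singleton)

lemma dcograph_certified: "dcograph G \<Longrightarrow> certified_digraph G"
  by (induction rule: dcograph.induct)
    (auto intro: certified_digraph_singleton certified_digraph_disj_union
      certified_digraph_order_comp certified_digraph_series_comp)

theorem theorem5p3:
  fixes G :: "'a digraph"
  assumes "dcograph G"
  shows "dpw G = dtw G"
proof -
  obtain k Xs \<beta> where "verts G \<noteq> {}" "finite (verts G)" "width_certificate G k Xs \<beta>"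
    using dcograph_certified[OF assms] by (rule certified_digraphD)
  then show ?thesis using dpw_eq_dtw_if_width_certificate by blast
qed

end
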